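(* Let $(\mathbb{K},|\cdot|)$ be a valued field such that $\mathbb{K}$ is an ordered quadratically closed field, let $f(X)=\sum_{m\ge0}a_mX^m$ with $a_m\in\mathbb{K}$, and let $M\in\widehat{\Omega}_{f,\mathbb{K}}\setminus\{0\}$ be semisimple with splitting bound at most $2$ over $\mathbb{K}$, with normalized fine Frobenius decomposition $M=\sum_{i=0}^s\gamma_i\mathbf{A}_i(M)-\sum_{j=1}^t\mathbf{Re}(\lambda_j)\mathbf{B}_j(M)^2+\sum_{j=1}^t\mathbf{Im}(\lambda_j)\mathbf{B}_j(M)$, where the $\lambda_j$ are the eigenvalues of $M$ not in $\mathbb{K}$ having positive imaginary part. Then $f(M)=\sum_{i=0}^sf(\gamma_i)\mathbf{A}_i(M)-\sum_{j=1}^t\mathbf{Re}f(\lambda_j)\,\mathbf{B}_j(M)^2+\sum_{j=1}^t\mathbf{Im}f(\lambda_j)\,\mathbf{B}_j(M)$, with $f(\gamma_i),\mathbf{Re}f(\lambda_j),\mathbf{Im}f(\lambda_j)\in\mathbb{K}^c$ for all $i,j$.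
   Context: An ordered field is ordered quadratically closed if every positive element has a square root in it (characteristic is then $0$). A valued field has an absolute value $|\cdot|$, completion $\mathbb{K}^c$, and the absolute value extends uniquely to $\overline{\mathbb{K}^c}\supseteq\overline{\mathbb{K}}$ and its completion. Fix $\sqrt{-1}\in\overline{\mathbb{K}}$. For $\lambda\in\overline{\mathbb{K}}$ with monic minimal polynomial $X^d+b_{d-1}X^{d-1}+\cdots$ over $\mathbb{K}$, $H_\mathbb{K}(\lambda)=-b_{d-1}/d$, $V_\mathbb{K}(\lambda)=\lambda-H_\mathbb{K}(\lambda)$. For $\lambda$ of degree $2$, $\mathbf{Re}(\lambda),\mathbf{Im}(\lambda)\in\mathbb{K}$ are defined by $H_\mathbb{K}(\lambda)=\mathbf{Re}(\lambda)$, $V_\mathbb{K}(\lambda)=\sqrt{-1}\,\mathbf{Im}(\lambda)$; "positive imaginary part" means $\mathbf{Im}(\lambda)>0$ in $\mathbb{K}$. $R_f$ is the radius of convergence of $\sum|a_m|X^m$; $\widehat{\Omega}_{f,\mathbb{K}}$ is the set of $A\in M_n(\mathbb{K})$ with spectral radius $<R_f$ whose eigenvalues $\lambda$, with $\alpha=H_\mathbb{K}(\lambda)$, $\beta=V_\mathbb{K}(\lambda)$, satisfy $|\alpha|+|\beta|<R_f$ (archimedean case) or $\max(|\alpha|,|\beta|)<R_f$ (non-archimedean case). For such $\lambda$: $\mathbf{Re}f(\lambda)=\sum_{m\ge0}a_m\sum_{h=0}^{\lfloor m/2\rfloor}\binom{m}{2h}\alpha^{m-2h}\beta^{2h}$ and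 $\mathbf{Im}f(\lambda)=-\sqrt{-1}\sum_{m\ge1}a_m\sum_{h=1}^{\lfloor(m+1)/2\rfloor}\binom{m}{2h-1}\alpha^{m-2h+1}\beta^{2h-1}$ (so $f(\lambda)=\mathbf{Re}f(\lambda)+\sqrt{-1}\,\mathbf{Im}f(\lambda)$). The splitting bound over $\mathbb{K}$ of $M$ is the maximum degree of the irreducible factors over $\mathbb{K}$ of its minimal polynomial. Normalized fine Frobenius decomposition: $\gamma_1,\dots,\gamma_s$ are the distinct nonzero eigenvalues of $M$ in $\mathbb{K}$; with $C_\mu(M)=\prod_{\nu\ne\mu}\frac{M-\nu I_n}{\mu-\nu}$ the Frobenius covariant of the eigenvalue $\mu$ (product over the other distinct eigenvalues), $\mathbf{A}_i(M)=C_{\gamma_i}(M)$ for $1\le i\le s$, $\mathbf{B}_j(M)=\sqrt{-1}\,[C_{\lambda_j}(M)-C_{\overline{\lambda_j}}(M)]$ where $\overline{\lambda_j}=\mathbf{Re}(\lambda_j)-\sqrt{-1}\,\mathbf{Im}(\lambda_j)$, $\gamma_0=0$ and $\mathbf{A}_0(M)=I_n-\sum_{i=1}^s\mathbf{A}_i(M)+\sum_{j=1}^t\mathbf{B}_j(M)^2$; these matrices lie in $M_n(\mathbb{K})$. *)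

theory Defs
  imports "HOL-Analysis.Analysis" "HOL-Computational_Algebra.Polynomial"
    "HOL-Computational_Algebra.Polynomial_Factorial"
begin

definition is_absval :: "('a::field \<Rightarrow> real) \<Rightarrow> bool" where
  "is_absval av \<longleftrightarrow> (\<forall>x. 0 \<le> av x) \<and> (\<forall>x. av x = 0 \<longleftrightarrow> x = 0)
     \<and> (\<forall>x y. av (x * y) = av x * av y) \<and> (\<forall>x y. av (x + y) \<le> av x + av y)"

definition av_complete :: "('a::field \<Rightarrow> real) \<Rightarrow> bool" where
  "av_complete av \<longleftrightarrow> (\<forall>X::nat \<Rightarrow> 'a.
     (\<forall>e>0. \<exists>N. \<forall>m\<ge>N. \<forall>k\<ge>N. av (X m - X k) < e) \<longrightarrow>
     (\<exists>L. (\<lambda>k. av (X k - L)) \<longlonglongrightarrow> 0))"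

definition is_field_emb :: "('k::field \<Rightarrow> 'a::field) \<Rightarrow> bool" where
  "is_field_emb emb \<longleftrightarrow> emb 1 = 1 \<and> (\<forall>x y. emb (x + y) = emb x + emb y)
     \<and> (\<forall>x y. emb (x * y) = emb x * emb y)"

text \<open>The completion of K, realised as the closure of (the image of) K in the ambient field.\<close>
definition Kc :: "('k \<Rightarrow> 'a::field) \<Rightarrow> ('a \<Rightarrow> real) \<Rightarrow> 'a set" where
  "Kc emb av = {x. \<forall>e>0. \<exists>y. av (x - emb y) < e}"

definition nonarch :: "('k \<Rightarrow> 'a::field) \<Rightarrow> ('a \<Rightarrow> real) \<Rightarrow> bool" where
  "nonarch emb av \<longleftrightarrow> (\<forall>x y. av (emb x + emb y) \<le> max (av (emb x)) (av (emb y)))"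

definition ord_quad_closed :: "'k::linordered_field itself \<Rightarrow> bool" where
  "ord_quad_closed _ \<longleftrightarrow> (\<forall>x::'k. 0 < x \<longrightarrow> (\<exists>y. y * y = x))"

definition av_sums :: "('a::field \<Rightarrow> real) \<Rightarrow> (nat \<Rightarrow> 'a) \<Rightarrow> 'a \<Rightarrow> bool" where
  "av_sums av s L \<longleftrightarrow> (\<lambda>N. av ((\<Sum>m<N. s m) - L)) \<longlonglongrightarrow> 0"

definition av_summable :: "('a::field \<Rightarrow> real) \<Rightarrow> (nat \<Rightarrow> 'a) \<Rightarrow> bool" where
  "av_summable av s \<longleftrightarrow> (\<exists>L. av_sums av s L)"

definition av_suminf :: "('a::field \<Rightarrow> real) \<Rightarrow> (nat \<Rightarrow> 'a) \<Rightarrow> 'a" where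
  "av_suminf av s = (THE L. av_sums av s L)"

definition mat_av_sums :: "('a::field \<Rightarrow> real) \<Rightarrow> (nat \<Rightarrow> 'a^'n^'n) \<Rightarrow> 'a^'n^'n \<Rightarrow> bool" where
  "mat_av_sums av S L \<longleftrightarrow> (\<forall>i j. av_sums av (\<lambda>m. S m $ i $ j) (L $ i $ j))"

definition Rf :: "('k \<Rightarrow> 'a::field) \<Rightarrow> ('a \<Rightarrow> real) \<Rightarrow> (nat \<Rightarrow> 'k) \<Rightarrow> ereal" where
  "Rf emb av a = conv_radius (\<lambda>m. av (emb (a m)))"

definition smat :: "'a::semiring_1 \<Rightarrow> 'a^'n^'n \<Rightarrow> 'a^'n^'n" where
  "smat c A = (\<chi> i j. c * A $ i $ j)"

primrec mpow :: "'a::semiring_1^'n^'n \<Rightarrow> nat \<Rightarrow> 'a^'n^'n" where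
  "mpow A 0 = mat 1"
| "mpow A (Suc k) = A ** mpow A k"

definition mapM :: "('k \<Rightarrow> 'a) \<Rightarrow> 'k^'n^'n \<Rightarrow> 'a^'n^'n" where
  "mapM f A = (\<chi> i j. f (A $ i $ j))"

definition peval :: "'a::field poly \<Rightarrow> 'a^'n^'n \<Rightarrow> 'a^'n^'n" where
  "peval p A = (\<Sum>i\<le>degree p. smat (coeff p i) (mpow A i))"

definition minpoly :: "'k::field^'n^'n \<Rightarrow> 'k poly" where
  "minpoly M = (THE p. lead_coeff p = 1 \<and> peval p M = 0 \<and>
      (\<forall>q. q \<noteq> 0 \<longrightarrow> peval q M = 0 \<longrightarrow> degree p \<le> degree q))"

definition splitting_bound_le :: "'k::field^'n^'n \<Rightarrow> nat \<Rightarrow> bool" where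
  "splitting_bound_le M b \<longleftrightarrow> (\<forall>q. irreducible q \<longrightarrow> q dvd minpoly M \<longrightarrow> degree q \<le> b)"

definition diagonal_mat :: "'a::zero^'n^'n \<Rightarrow> bool" where
  "diagonal_mat D \<longleftrightarrow> (\<forall>i j. i \<noteq> j \<longrightarrow> D $ i $ j = 0)"

text \<open>Semisimple: diagonalisable over the algebraically closed ambient field.\<close>
definition semisimple :: "('k \<Rightarrow> 'a::field) \<Rightarrow> 'k^'n^'n \<Rightarrow> bool" where
  "semisimple emb M \<longleftrightarrow> (\<exists>P::'a^'n^'n. invertible P \<and> diagonal_mat (matrix_inv P ** mapM emb M ** P))"

definition eigs :: "('k \<Rightarrow> 'a::field) \<Rightarrow> 'k^'n^'n \<Rightarrow> 'a set" where
  "eigs emb M = {z. det (mat z - mapM emb M) = 0}"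

definition spec_rad :: "('k \<Rightarrow> 'a::field) \<Rightarrow> ('a \<Rightarrow> real) \<Rightarrow> 'k^'n^'n \<Rightarrow> real" where
  "spec_rad emb av M = Max (av ` eigs emb M)"

definition mpK :: "('k::field \<Rightarrow> 'a::field) \<Rightarrow> 'a \<Rightarrow> 'k poly" where
  "mpK emb l = (THE p. lead_coeff p = 1 \<and> irreducible p \<and> poly (map_poly emb p) l = 0)"

definition HK :: "('k::field \<Rightarrow> 'a::field) \<Rightarrow> 'a \<Rightarrow> 'k" where
  "HK emb l = - coeff (mpK emb l) (degree (mpK emb l) - 1) / of_nat (degree (mpK emb l))"

definition VK :: "('k::field \<Rightarrow> 'a::field) \<Rightarrow> 'a \<Rightarrow> 'a" where
  "VK emb l = l - emb (HK emb l)"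

definition ReK :: "('k::field \<Rightarrow> 'a::field) \<Rightarrow> 'a \<Rightarrow> 'k" where
  "ReK emb l = HK emb l"

definition ImK :: "('k::field \<Rightarrow> 'a::field) \<Rightarrow> 'a \<Rightarrow> 'a \<Rightarrow> 'k" where
  "ImK emb ii l = (THE y. VK emb l = ii * emb y)"

definition Omega_hat :: "('k::field \<Rightarrow> 'a::field) \<Rightarrow> ('a \<Rightarrow> real) \<Rightarrow> (nat \<Rightarrow> 'k) \<Rightarrow> ('k^'n^'n) set" where
  "Omega_hat emb av a = {M. ereal (spec_rad emb av M) < Rf emb av a \<and>
     (\<forall>l \<in> eigs emb M.
        (if nonarch emb av
         then ereal (max (av (emb (HK emb l))) (av (VK emb l))) < Rf emb av a
         else ereal (av (emb (HK emb l)) + av (VK emb l)) < Rf emb av a))}"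

definition fK :: "('k \<Rightarrow> 'a::field) \<Rightarrow> ('a \<Rightarrow> real) \<Rightarrow> (nat \<Rightarrow> 'k) \<Rightarrow> 'a \<Rightarrow> 'a" where
  "fK emb av a z = av_suminf av (\<lambda>m. emb (a m) * z ^ m)"

definition Re_ser :: "('k::field \<Rightarrow> 'a::field) \<Rightarrow> (nat \<Rightarrow> 'k) \<Rightarrow> 'a \<Rightarrow> nat \<Rightarrow> 'a" where
  "Re_ser emb a l m = (let \<alpha> = emb (HK emb l); \<beta> = VK emb l in
     emb (a m) * (\<Sum>h\<le>m div 2. of_nat (m choose (2*h)) * \<alpha> ^ (m - 2*h) * \<beta> ^ (2*h)))"

definition Im_ser :: "('k::field \<Rightarrow> 'a::field) \<Rightarrow> (nat \<Rightarrow> 'k) \<Rightarrow> 'a \<Rightarrow> nat \<Rightarrow> 'a" where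
  "Im_ser emb a l m = (let \<alpha> = emb (HK emb l); \<beta> = VK emb l in
     (if m = 0 then 0 else
     emb (a m) * (\<Sum>h\<in>{1..(m+1) div 2}. of_nat (m choose (2*h - 1)) * \<alpha> ^ (m + 1 - 2*h) * \<beta> ^ (2*h - 1))))"

definition Ref :: "('k::field \<Rightarrow> 'a::field) \<Rightarrow> ('a \<Rightarrow> real) \<Rightarrow> (nat \<Rightarrow> 'k) \<Rightarrow> 'a \<Rightarrow> 'a" where
  "Ref emb av a l = av_suminf av (Re_ser emb a l)"

definition Imf :: "('k::field \<Rightarrow> 'a::field) \<Rightarrow> ('a \<Rightarrow> real) \<Rightarrow> 'a \<Rightarrow> (nat \<Rightarrow> 'k) \<Rightarrow> 'a \<Rightarrow> 'a" where
  "Imf emb av ii a l = - ii * av_suminf av (Im_ser emb a l)"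

text \<open>Frobenius covariant C_mu(M) = prod over the other distinct eigenvalues nu of (M - nu I)/(mu - nu),
  computed as the evaluation at M of the corresponding (commutative) product of polynomials.\<close>
definition frob_cov :: "('k \<Rightarrow> 'a::field) \<Rightarrow> 'k^'n^'n \<Rightarrow> 'a \<Rightarrow> 'a^'n^'n" where
  "frob_cov emb M \<mu> = peval (\<Prod>\<nu>\<in>eigs emb M - {\<mu>}. smult (1 / (\<mu> - \<nu>)) [:- \<nu>, 1:]) (mapM emb M)"

definition Gam :: "('k \<Rightarrow> 'a::field) \<Rightarrow> 'k^'n^'n \<Rightarrow> 'a set" where
  "Gam emb M = {g \<in> eigs emb M. g \<noteq> 0 \<and> g \<in> range emb}"

definition Lam :: "('k::linordered_field \<Rightarrow> 'a::field) \<Rightarrow> 'a \<Rightarrow> 'k^'n^'n \<Rightarrow> 'a set" where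
  "Lam emb ii M = {l \<in> eigs emb M. l \<notin> range emb \<and> 0 < ImK emb ii l}"

definition conjK :: "('k::field \<Rightarrow> 'a::field) \<Rightarrow> 'a \<Rightarrow> 'a \<Rightarrow> 'a" where
  "conjK emb ii l = emb (ReK emb l) - ii * emb (ImK emb ii l)"

definition Amat :: "('k \<Rightarrow> 'a::field) \<Rightarrow> 'k^'n^'n \<Rightarrow> 'a \<Rightarrow> 'a^'n^'n" where
  "Amat emb M g = frob_cov emb M g"

definition Bmat :: "('k::field \<Rightarrow> 'a::field) \<Rightarrow> 'a \<Rightarrow> 'k^'n^'n \<Rightarrow> 'a \<Rightarrow> 'a^'n^'n" where
  "Bmat emb ii M l = smat ii (frob_cov emb M l - frob_cov emb M (conjK emb ii l))"

definition A0mat :: "('k::linordered_field \<Rightarrow> 'a::field) \<Rightarrow> 'a \<Rightarrow> 'k^'n^'n \<Rightarrow> 'a^'n^'n" where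
  "A0mat emb ii M = mat 1 - (\<Sum>g\<in>Gam emb M. Amat emb M g)
      + (\<Sum>l\<in>Lam emb ii M. Bmat emb ii M l ** Bmat emb ii M l)"

end

theory Submission
  imports Defs
begin

(* Diagonalise M over the ambient field as P diag(d) P^-1. The powers of M, its Frobenius
   covariants and hence A_i(M), B_j(M), A_0(M) are all of the form P diag(phi(d_k)) P^-1 for
   scalar functions phi, and sums and products of such matrices correspond to sums and products of
   the phi's. The claimed identity thus reduces to one scalar identity per eigenvalue e: the weight
   of the right-hand side at e equals f(e). This is immediate for e in K. For e outside K the
   splitting bound makes the minimal polynomial of e over K quadratic; as K is ordered quadratically
   closed, e = alpha + i y with alpha, y in K and y <> 0, and the other root is alpha - i y.
   Splitting the binomial expansion of (alpha + beta)^m into even and odd powers of beta gives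
   f(alpha + beta) = Re f + i Im f and f(alpha - beta) = Re f - i Im f. All series converge
   absolutely by the bounds in the definition of Omega-hat and completeness of the absolute value,
   and series with partial sums in K converge in K^c. *)

section \<open>Field embeddings\<close>

locale field_emb =
  fixes emb :: "'k::field \<Rightarrow> 'a::field"
  assumes is_field_emb: "is_field_emb emb"
begin

lemma emb_1 [simp]: "emb 1 = 1"
  and emb_add [simp]: "emb (x + y) = emb x + emb y"
  and emb_mult [simp]: "emb (x * y) = emb x * emb y"
  using is_field_emb unfolding is_field_emb_def by auto

lemma emb_0 [simp]: "emb 0 = 0"
  using emb_add[of 0 0] by (metis add_cancel_right_right add.left_neutral)

lemma emb_uminus [simp]: "emb (- x) = - emb x"
  using emb_add[of x "- x"] by (simp add: eq_neg_iff_add_eq_0 add.commute)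

lemma emb_diff [simp]: "emb (x - y) = emb x - emb y"
  using emb_add[of x "- y"] by simp

lemma emb_eq_0_iff [simp]: "emb x = 0 \<longleftrightarrow> x = 0"
proof
  assume "emb x = 0"
  then have "emb (x * inverse x) = 0" by simp
  then show "x = 0" by (cases "x = 0") simp_all
qed simp

lemma emb_eq_iff [simp]: "emb x = emb y \<longleftrightarrow> x = y"
  using emb_eq_0_iff[of "x - y"] by simp

lemma emb_power [simp]: "emb (x ^ n) = emb x ^ n"
  by (induction n) simp_all

lemma emb_of_nat [simp]: "emb (of_nat n) = of_nat n"
  by (induction n) simp_all

lemma emb_numeral [simp]: "emb (numeral n) = numeral n"
  using emb_of_nat[of "numeral n"] by simp

lemma emb_sum [simp]: "emb (sum f S) = (\<Sum>x\<in>S. emb (f x))"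
  by (induction S rule: infinite_finite_induct) simp_all

lemma emb_divide [simp]: "emb (x / y) = emb x / emb y"
proof (cases "y = 0")
  case False
  then have "emb (x / y) * emb y = emb x"
    by (simp flip: emb_mult)
  then show ?thesis using False by (simp add: eq_divide_eq)
qed simp

lemma sum_in_range_emb: "(\<And>x. x \<in> S \<Longrightarrow> f x \<in> range emb) \<Longrightarrow> sum f S \<in> range emb"
proof -
  assume "\<And>x. x \<in> S \<Longrightarrow> f x \<in> range emb"
  then have "\<forall>x\<in>S. \<exists>y. f x = emb y" by blast
  then obtain g where g: "\<forall>x\<in>S. f x = emb (g x)" by (rule bchoice[THEN exE])
  have "sum f S = emb (sum g S)" unfolding emb_sum using g by (auto intro: sum.cong)
  then show ?thesis by blast
qed

lemma mult_in_range_emb: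
  assumes "x \<in> range emb" "y \<in> range emb"
  shows "x * y \<in> range emb"
proof -
  obtain u v where "x = emb u" "y = emb v" using assms by blast
  then have "x * y = emb (u * v)" by simp
  then show ?thesis by (rule image_eqI[OF _ UNIV_I])
qed

definition poly_emb :: "'k poly \<Rightarrow> 'a \<Rightarrow> 'a" where
  "poly_emb p z = poly (map_poly emb p) z"

lemma coeff_map_emb [simp]: "coeff (map_poly emb p) n = emb (coeff p n)"
  by (simp add: coeff_map_poly)

lemma degree_map_emb [simp]: "degree (map_poly emb p) = degree p"
  by (simp add: degree_map_poly)

lemma poly_emb_altdef: "poly_emb p z = (\<Sum>i\<le>degree p. emb (coeff p i) * z ^ i)"
  unfolding poly_emb_def poly_altdef by simp

lemma poly_emb_0 [simp]: "poly_emb 0 z = 0"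
  and poly_emb_const [simp]: "poly_emb [:c:] z = emb c"
  and poly_emb_X [simp]: "poly_emb [:0, 1:] z = z"
  by (simp_all add: poly_emb_def map_poly_pCons)

lemma map_poly_emb_add: "map_poly emb (p + q) = map_poly emb p + map_poly emb q"
  and map_poly_emb_diff: "map_poly emb (p - q) = map_poly emb p - map_poly emb q"
  and map_poly_emb_mult: "map_poly emb (p * q) = map_poly emb p * map_poly emb q"
  by (simp_all add: poly_eq_iff coeff_mult)

lemma poly_emb_add [simp]: "poly_emb (p + q) z = poly_emb p z + poly_emb q z"
  and poly_emb_diff [simp]: "poly_emb (p - q) z = poly_emb p z - poly_emb q z"
  and poly_emb_uminus [simp]: "poly_emb (- p) z = - poly_emb p z"
  and poly_emb_mult [simp]: "poly_emb (p * q) z = poly_emb p z * poly_emb q z"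
  using map_poly_emb_diff[of 0 p]
  by (simp_all add: poly_emb_def map_poly_emb_add map_poly_emb_diff map_poly_emb_mult)

lemma poly_emb_1 [simp]: "poly_emb 1 z = 1"
  using poly_emb_const[of 1 z] by (simp add: one_pCons)

lemma poly_emb_smult [simp]: "poly_emb (smult c p) z = emb c * poly_emb p z"
  by (metis mult.left_neutral poly_emb_const poly_emb_mult smult_one mult_smult_left)

lemma poly_emb_sum [simp]: "poly_emb (sum f S) z = (\<Sum>x\<in>S. poly_emb (f x) z)"
  by (induction S rule: infinite_finite_induct) simp_all

lemma poly_emb_prod [simp]: "poly_emb (prod f S) z = (\<Prod>x\<in>S. poly_emb (f x) z)"
  by (induction S rule: infinite_finite_induct) simp_all

lemma poly_emb_of_int [simp]: "poly_emb (of_int n) z = of_int n"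
proof -
  have "poly_emb (of_nat m) z = of_nat m" for m
    by (induction m) simp_all
  then show ?thesis by (cases n) simp_all
qed

lemma poly_emb_det: "poly_emb (det X) z = det (\<chi> i j. poly_emb (X $ i $ j) z)"
  unfolding det_def by (simp only: poly_emb_sum poly_emb_mult poly_emb_prod poly_emb_of_int vec_lambda_beta)

lemma degree_pos_if_poly_emb_root:
  assumes "r \<noteq> 0" "poly_emb r z = 0"
  shows "degree r > 0"
  using assms by (cases "degree r") (auto elim!: degree_eq_zeroE)

lemma irreducible_root_degree_le:
  assumes irr: "irreducible p" and root: "poly_emb p z = 0"
  shows "r \<noteq> 0 \<Longrightarrow> poly_emb r z = 0 \<Longrightarrow> degree p \<le> degree r"
proof (induction "degree r" arbitrary: r rule: less_induct)
  case less
  have r_nonunit: "\<not> is_unit r"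
    using degree_pos_if_poly_emb_root[OF less.prems] is_unit_iff_degree[OF less.prems(1)] by simp
  have "poly_emb (p mod r) z = 0"
    using root less.prems(2) div_mult_mod_eq[of p r] by (metis add_0 mult_zero_right poly_emb_add poly_emb_mult)
  show ?case
  proof (cases "p mod r = 0")
    case True
    then have p: "p = r * (p div r)" by (metis mod_0_imp_dvd dvd_mult_div_cancel)
    then have "is_unit (p div r)" using irreducibleD[OF irr p] r_nonunit by blast
    moreover have "p div r \<noteq> 0" using p irr by auto
    ultimately have "degree (p div r) = 0" using is_unit_iff_degree by blast
    then show ?thesis
      using arg_cong[OF p, of degree] degree_mult_eq[OF less.prems(1) \<open>p div r \<noteq> 0\<close>] by simp
  next
    case False
    then have "degree (p mod r) < degree r" using degree_mod_less'[OF less.prems(1)] by simp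
    moreover have "degree p \<le> degree (p mod r)"
      using calculation False \<open>poly_emb (p mod r) z = 0\<close> by (rule less.hyps)
    ultimately show ?thesis by simp
  qed
qed

lemma irreducible_root_dvd:
  assumes irr: "irreducible p" and "poly_emb p z = 0" and "poly_emb q z = 0"
  shows "p dvd q"
proof -
  have root: "poly_emb (q mod p) z = 0"
    using assms(2,3) div_mult_mod_eq[of q p] by (metis add_0 mult_zero_right poly_emb_add poly_emb_mult)
  have "q mod p = 0"
  proof (rule ccontr)
    assume nz: "q mod p \<noteq> 0"
    have "p \<noteq> 0" using irr by auto
    then have "degree (q mod p) < degree p" using degree_mod_less' nz by blast
    moreover have "degree p \<le> degree (q mod p)"
      using irreducible_root_degree_le[OF assms(1,2) nz root] .
    ultimately show False by simp
  qed
  then show ?thesis by (simp add: mod_0_imp_dvd)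
qed

lemma ex_monic_irreducible_root:
  shows "q \<noteq> 0 \<Longrightarrow> poly_emb q z = 0 \<Longrightarrow> \<exists>p. lead_coeff p = 1 \<and> irreducible p \<and> poly_emb p z = 0"
proof (induction "degree q" arbitrary: q rule: less_induct)
  case less
  show ?case
  proof (cases "irreducible q")
    case True
    let ?p = "smult (inverse (lead_coeff q)) q"
    have "irreducible ?p"
      using True less.prems(1) irreducible_mult_unit_left[of "[:inverse (lead_coeff q):]" q]
      by (simp add: is_unit_const_poly_iff dvd_field_iff)
    then show ?thesis using less.prems by (intro exI[of _ ?p]) simp
  next
    case False
    have "\<not> is_unit q"
      using degree_pos_if_poly_emb_root[OF less.prems] is_unit_iff_degree[OF less.prems(1)] by simp
    then obtain b c where q: "q = b * c" "\<not> is_unit b" "\<not> is_unit c"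
      using False less.prems(1) unfolding irreducible_def by blast
    then have "b \<noteq> 0" "c \<noteq> 0" using less.prems(1) by auto
    then have deg: "degree b < degree q" "degree c < degree q"
      using q is_unit_iff_degree by (auto simp: degree_mult_eq)
    have "poly_emb b z = 0 \<or> poly_emb c z = 0" using less.prems(2) q(1) by simp
    then show ?thesis using less.hyps deg \<open>b \<noteq> 0\<close> \<open>c \<noteq> 0\<close> by blast
  qed
qed

lemma monic_irreducible_root_unique:
  assumes "lead_coeff p = 1" "irreducible p" "poly_emb p z = 0"
    and "lead_coeff q = 1" "irreducible q" "poly_emb q z = 0"
  shows "p = q"
proof -
  have "p dvd q" "q dvd p" using assms irreducible_root_dvd by blast+
  then obtain r where r: "q = p * r" by (elim dvdE)
  have "p \<noteq> 0" "q \<noteq> 0" using assms by auto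
  then have "r \<noteq> 0" using r by auto
  have "degree p \<le> degree q" "degree q \<le> degree p"
    using \<open>p dvd q\<close> \<open>q dvd p\<close> \<open>p \<noteq> 0\<close> \<open>q \<noteq> 0\<close> by (simp_all add: dvd_imp_degree_le)
  moreover have "degree q = degree p + degree r"
    using arg_cong[OF r, of degree] degree_mult_eq[OF \<open>p \<noteq> 0\<close> \<open>r \<noteq> 0\<close>] by simp
  ultimately obtain c where "r = [:c:]" by (metis add_le_same_cancel1 le_zero_eq degree_eq_zeroE)
  moreover have "lead_coeff q = lead_coeff p * lead_coeff r" by (simp add: r lead_coeff_mult)
  ultimately show ?thesis using r assms(1,4) \<open>r \<noteq> 0\<close> by simp
qed

lemma mpK_eqI:
  assumes "lead_coeff p = 1" "irreducible p" "poly_emb p z = 0"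
  shows "mpK emb z = p"
  unfolding mpK_def
proof (rule the_equality)
  show "lead_coeff p = 1 \<and> irreducible p \<and> poly (map_poly emb p) z = 0"
    using assms by (simp add: poly_emb_def)
next
  fix q assume "lead_coeff q = 1 \<and> irreducible q \<and> poly (map_poly emb q) z = 0"
  then show "q = p" using monic_irreducible_root_unique[OF _ _ _ assms] by (simp add: poly_emb_def)
qed

end

section \<open>Quadratic elements over an ordered quadratically closed field\<close>

locale quad_closed_emb = field_emb emb
  for emb :: "'k::linordered_field \<Rightarrow> 'a::field" +
  fixes ii :: 'a
  assumes ii_sq: "ii * ii = -1"
    and K_oqc: "ord_quad_closed TYPE('k)"
begin

lemma ii_nonzero [simp]: "ii \<noteq> 0"
  using ii_sq by auto

lemma numeral_nonzero [simp]: "(numeral n :: 'a) \<noteq> 0"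
  using emb_eq_0_iff[of "numeral n"] by simp

lemma ImK_eqI:
  assumes "VK emb z = ii * emb y"
  shows "ImK emb ii z = y"
  unfolding ImK_def
proof (rule the_equality)
  fix y' assume "VK emb z = ii * emb y'"
  then have "ii * emb y' = ii * emb y" using assms by simp
  then show "y' = y" using ii_sq by auto
qed (fact assms)

lemma conjK_eq:
  assumes "VK emb z = ii * emb y"
  shows "conjK emb ii z = emb (HK emb z) - VK emb z"
  using assms by (simp add: conjK_def ReK_def ImK_eqI)

lemma poly_emb_monic_quadratic:
  assumes "lead_coeff p = 1" "degree p = 2"
  shows "poly_emb p x = emb (coeff p 0) + emb (coeff p 1) * x + x * x"
  using assms by (simp add: poly_emb_altdef numeral_2_eq_2 atMost_Suc power2_eq_square)

(* Completing the square, v = z + b/2 satisfies v^2 = b^2/4 - c. Since z is not in K this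
   discriminant has no square root in K, so it is negative and - (b^2/4 - c) = s^2 with s in K. *)
lemma quadratic_root_imaginary:
  assumes nK: "z \<notin> range emb" and root: "z * z + emb b * z + emb c = 0"
  obtains y where "y \<noteq> 0" "z + emb (b / 2) = ii * emb y"
proof -
  define v where "v = z + emb (b / 2)"
  define D where "D = b * b / 4 - c"
  have vv: "v * v = emb D"
  proof -
    have "v * v = z * z + emb b * z + emb c + emb D"
      by (simp add: v_def D_def algebra_simps)
    then show ?thesis using root by simp
  qed
  have v_ne: "v \<noteq> emb x" for x
    using nK unfolding v_def by (metis add_diff_cancel_right' emb_diff rangeI)
  have "\<not> 0 \<le> D"
  proof
    assume "0 \<le> D"
    then obtain s where "s * s = D"
      using K_oqc unfolding ord_quad_closed_def by (cases "D = 0") force+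
    then have "(v - emb s) * (v + emb s) = 0" using vv by (simp add: algebra_simps flip: \<open>s * s = D\<close>)
    then show False using v_ne[of s] v_ne[of "- s"] by (simp add: eq_neg_iff_add_eq_0)
  qed
  then obtain s where s: "s * s = - D" using K_oqc unfolding ord_quad_closed_def by force
  then have "s \<noteq> 0" using \<open>\<not> 0 \<le> D\<close> by auto
  have "(v - ii * emb s) * (v + ii * emb s) = v * v - (ii * ii) * emb (s * s)"
    by (simp add: algebra_simps)
  also have "\<dots> = 0" using vv s ii_sq by simp
  finally have "v = ii * emb s \<or> v = ii * emb (- s)"
    by (simp add: eq_neg_iff_add_eq_0)
  then show ?thesis using that \<open>s \<noteq> 0\<close> unfolding v_def by (metis neg_equal_0_iff_equal)
qed

lemma quadratic_VK:
  assumes p: "lead_coeff p = 1" "irreducible p" "degree p = 2" "poly_emb p z = 0"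
    and nK: "z \<notin> range emb"
  obtains y where "y \<noteq> 0" "HK emb z = - coeff p 1 / 2" "VK emb z = ii * emb y"
proof -
  have "z * z + emb (coeff p 1) * z + emb (coeff p 0) = 0"
    using p(4) poly_emb_monic_quadratic[OF p(1,3)] by (simp add: algebra_simps)
  then obtain y where y: "y \<noteq> 0" "z + emb (coeff p 1 / 2) = ii * emb y"
    using quadratic_root_imaginary[OF nK] by blast
  have HK: "HK emb z = - coeff p 1 / 2"
    unfolding HK_def mpK_eqI[OF p(1,2,4)] using p(3) by simp
  then have "VK emb z = ii * emb y" using y(2) by (simp add: VK_def)
  then show ?thesis using that y(1) HK by blast
qed

lemma quadratic_conjK:
  assumes p: "lead_coeff p = 1" "irreducible p" "degree p = 2" "poly_emb p z = 0"
    and nK: "z \<notin> range emb"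
  shows "poly_emb p (conjK emb ii z) = 0" "conjK emb ii z \<notin> range emb"
    and "ImK emb ii (conjK emb ii z) = - ImK emb ii z"
    and "conjK emb ii (conjK emb ii z) = z"
proof -
  obtain y where y: "y \<noteq> 0" "HK emb z = - coeff p 1 / 2" "VK emb z = ii * emb y"
    using quadratic_VK[OF assms] .
  define w where "w = conjK emb ii z"
  have w: "w = - z - emb (coeff p 1)"
    unfolding w_def conjK_eq[OF y(3)] using y(2) by (simp add: VK_def)
  show root: "poly_emb p (conjK emb ii z) = 0"
    using p(4) unfolding w_def[symmetric] poly_emb_monic_quadratic[OF p(1,3)] w
    by (simp add: algebra_simps)
  show nK': "conjK emb ii z \<notin> range emb"
  proof
    assume "conjK emb ii z \<in> range emb"
    then obtain x where "w = emb x" by (auto simp: w_def)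
    moreover have "z = - w - emb (coeff p 1)" using w by simp
    ultimately have "z = emb (- x - coeff p 1)" by simp
    then show False using nK by blast
  qed
  obtain y' where y': "HK emb w = - coeff p 1 / 2" "VK emb w = ii * emb y'"
    using quadratic_VK[OF p(1-3) root nK'] unfolding w_def by blast
  have VK_w: "VK emb w = - VK emb z"
    unfolding VK_def y'(1) y(2) unfolding w by (simp add: field_simps)
  then have VK_w': "VK emb w = ii * emb (- y)" using y(3) by simp
  then show "ImK emb ii w = - ImK emb ii z" using y(3) by (simp add: ImK_eqI)
  have "conjK emb ii w = emb (HK emb w) - VK emb w" using VK_w' by (rule conjK_eq)
  then show "conjK emb ii w = z" unfolding VK_w y'(1) y(2)[symmetric] by (simp add: VK_def)
qed

end

section \<open>Absolute values and series\<close>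

locale absval =
  fixes av :: "'a::field \<Rightarrow> real"
  assumes is_absval: "is_absval av"
begin

lemma av_nonneg [simp]: "0 \<le> av x"
  and av_eq_0_iff [simp]: "av x = 0 \<longleftrightarrow> x = 0"
  and av_mult [simp]: "av (x * y) = av x * av y"
  and av_triangle: "av (x + y) \<le> av x + av y"
  using is_absval unfolding is_absval_def by auto

lemma av_0 [simp]: "av 0 = 0"
  by simp

lemma av_1 [simp]: "av 1 = 1"
  using av_mult[of 1 1] by simp

lemma av_minus [simp]: "av (- x) = av x"
proof -
  have "av (-1) * av (-1) = 1" by (simp flip: av_mult)
  then have "(av (-1) - 1) * (av (-1) + 1) = 0" by (simp add: algebra_simps)
  moreover have "av (-1) + 1 \<noteq> 0" using av_nonneg[of "-1"] by linarith
  ultimately have "av (-1) = 1" by simp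
  then show ?thesis using av_mult[of "-1" x] by simp
qed

lemma av_minus_commute: "av (x - y) = av (y - x)"
  using av_minus[of "x - y"] by simp

lemma av_power [simp]: "av (x ^ n) = av x ^ n"
  by (induction n) simp_all

lemma av_sum_le: "av (sum f S) \<le> (\<Sum>x\<in>S. av (f x))"
  by (induction S rule: infinite_finite_induct) (auto intro: order.trans[OF av_triangle])

lemma av_of_nat_le: "av (of_nat n) \<le> of_nat n"
  by (induction n) (auto intro: order.trans[OF av_triangle])

lemma av_sums_unique: "av_sums av s L \<Longrightarrow> av_sums av s L' \<Longrightarrow> L = L'"
proof -
  assume "av_sums av s L" "av_sums av s L'"
  then have lim: "(\<lambda>N. av ((\<Sum>m<N. s m) - L) + av ((\<Sum>m<N. s m) - L')) \<longlonglongrightarrow> 0"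
    unfolding av_sums_def using tendsto_add by fastforce
  have "av (L - L') \<le> av ((\<Sum>m<N. s m) - L) + av ((\<Sum>m<N. s m) - L')" for N
    using av_triangle[of "L - (\<Sum>m<N. s m)" "(\<Sum>m<N. s m) - L'"] by (simp add: av_minus_commute)
  then have "av (L - L') \<le> 0" using lim by (intro LIMSEQ_le_const) auto
  then show "L = L'" using av_nonneg[of "L - L'"] by simp
qed

lemma av_suminf_eqI: "av_sums av s L \<Longrightarrow> av_suminf av s = L"
  unfolding av_suminf_def using av_sums_unique by blast

lemma av_sums_add: "av_sums av s L \<Longrightarrow> av_sums av t L' \<Longrightarrow> av_sums av (\<lambda>m. s m + t m) (L + L')"
  unfolding av_sums_def
proof (rule real_tendsto_sandwich[OF _ _ tendsto_const])
  assume "(\<lambda>N. av ((\<Sum>m<N. s m) - L)) \<longlonglongrightarrow> 0" "(\<lambda>N. av ((\<Sum>m<N. t m) - L')) \<longlonglongrightarrow> 0"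
  then show "(\<lambda>N. av ((\<Sum>m<N. s m) - L) + av ((\<Sum>m<N. t m) - L')) \<longlonglongrightarrow> 0"
    using tendsto_add by fastforce
  show "\<forall>\<^sub>F N in sequentially. av ((\<Sum>m<N. s m + t m) - (L + L'))
      \<le> av ((\<Sum>m<N. s m) - L) + av ((\<Sum>m<N. t m) - L')"
    using av_triangle by (simp add: sum.distrib add_diff_add)
qed simp

lemma av_sums_cmult: "av_sums av s L \<Longrightarrow> av_sums av (\<lambda>m. c * s m) (c * L)"
  unfolding av_sums_def
  using tendsto_mult_left[of "\<lambda>N. av ((\<Sum>m<N. s m) - L)" 0 sequentially "av c"]
  by (simp flip: sum_distrib_left right_diff_distrib)

lemma av_sums_sum:
  "finite I \<Longrightarrow> (\<And>i. i \<in> I \<Longrightarrow> av_sums av (s i) (L i))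
   \<Longrightarrow> av_sums av (\<lambda>m. \<Sum>i\<in>I. s i m) (\<Sum>i\<in>I. L i)"
proof (induction I rule: finite_induct)
  case (insert i I)
  then show ?case using av_sums_add[of "s i" "L i"] by simp
qed (simp add: av_sums_def)

lemma av_sums_if_summable_av:
  assumes complete: "av_complete av" and summable: "summable (\<lambda>m. av (s m))"
  shows "av_sums av s (av_suminf av s)"
proof -
  have cauchy: "\<exists>N. \<forall>m\<ge>N. \<forall>k\<ge>N. av ((\<Sum>i<m. s i) - (\<Sum>i<k. s i)) < e" if "e > 0" for e
  proof -
    obtain N where N: "\<And>k n. k \<ge> N \<Longrightarrow> norm (\<Sum>i\<in>{k..<n}. av (s i)) < e"
      using summable \<open>e > 0\<close> unfolding summable_Cauchy by blast
    have bound: "av ((\<Sum>i<m. s i) - (\<Sum>i<k. s i)) < e" if "k \<ge> N" "k \<le> m" for k m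
    proof -
      have "av ((\<Sum>i<m. s i) - (\<Sum>i<k. s i)) = av (\<Sum>i\<in>{k..<m}. s i)"
        using sum_diff_nat_ivl[of 0 k m s] that by (simp add: atLeast0LessThan)
      also have "\<dots> \<le> (\<Sum>i\<in>{k..<m}. av (s i))" by (rule av_sum_le)
      also have "\<dots> < e" using N[OF \<open>k \<ge> N\<close>, of m] by simp
      finally show ?thesis .
    qed
    show ?thesis
    proof (intro exI allI impI)
      fix m k assume "m \<ge> N" "k \<ge> N"
      then show "av ((\<Sum>i<m. s i) - (\<Sum>i<k. s i)) < e"
        using bound[of k m] bound[of m k] by (cases "k \<le> m") (simp_all add: av_minus_commute)
    qed
  qed
  then obtain L where "(\<lambda>N. av ((\<Sum>i<N. s i) - L)) \<longlonglongrightarrow> 0"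
    using complete[unfolded av_complete_def, THEN spec[of _ "\<lambda>N. \<Sum>i<N. s i"]] cauchy by blast
  then have "av_sums av s L" by (simp add: av_sums_def)
  then show ?thesis using av_suminf_eqI by simp
qed

lemma av_sums_in_Kc:
  assumes "av_sums av s L" and "\<And>N. (\<Sum>m<N. s m) \<in> range emb"
  shows "L \<in> Kc emb av"
  unfolding Kc_def
proof (intro CollectI allI impI)
  fix e :: real assume "e > 0"
  obtain N where "\<forall>n\<ge>N. norm (av ((\<Sum>m<n. s m) - L) - 0) < e"
    using LIMSEQ_D[OF assms(1)[unfolded av_sums_def] \<open>e > 0\<close>] by blast
  then have "av ((\<Sum>m<N. s m) - L) < e" by simp
  moreover obtain y where "(\<Sum>m<N. s m) = emb y" using assms(2) by blast
  ultimately show "\<exists>y. av (L - emb y) < e" by (metis av_minus_commute)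
qed

end

lemma nonarch_av_of_nat_le_1:
  assumes "field_emb emb" "absval av" and na: "nonarch emb av"
  shows "av (of_nat n) \<le> 1"
proof (induction n)
  case (Suc n)
  interpret field_emb emb by fact
  interpret absval av by fact
  have "av (of_nat (Suc n)) = av (emb (of_nat n) + emb 1)" by (simp add: add.commute)
  also have "\<dots> \<le> max (av (emb (of_nat n))) (av (emb 1))"
    using na unfolding nonarch_def by blast
  finally show ?case using Suc by simp
qed (simp add: absval.av_0[OF assms(2)])

lemma summable_below_conv_radius:
  fixes c :: "nat \<Rightarrow> real"
  assumes "0 \<le> r" "ereal r < conv_radius c"
  shows "summable (\<lambda>m. c m * r ^ m)"
  using summable_in_conv_radius[of r c] assms by simp

lemma summable_Suc_times_below_conv_radius:
  fixes c :: "nat \<Rightarrow> real"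
  assumes r: "0 \<le> r" "ereal r < conv_radius c" and c_nonneg: "\<And>m. c m \<ge> 0"
  shows "summable (\<lambda>m. c m * (of_nat (Suc m) * r ^ m))"
proof -
  obtain r' where r': "r < r'" "ereal r' < conv_radius c"
  proof (cases "conv_radius c")
    case (real R)
    then show ?thesis using r(2) that[of "(r + R) / 2"] by auto
  next
    case PInf
    then show ?thesis using that[of "r + 1"] by auto
  qed (use r(2) in auto)
  have "(\<lambda>m. of_nat m * (r / r') ^ m) \<longlonglongrightarrow> (0::real)"
    using r r' by (intro powser_times_n_limit_0) auto
  then obtain N where N: "\<And>m. m \<ge> N \<Longrightarrow> of_nat m * (r / r') ^ m < 1"
    using LIMSEQ_D[of _ 0 1] by fastforce
  have "summable (\<lambda>m. c m * r' ^ m)" using summable_below_conv_radius r r' by simp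
  then have "summable (\<lambda>m. c m * (of_nat m * r ^ m))"
  proof (rule summable_comparison_test'[where N = N])
    fix m assume "m \<ge> N"
    then have "of_nat m * r ^ m \<le> r' ^ m"
      using N[of m] r r' by (simp add: power_divide field_simps)
    then show "norm (c m * (of_nat m * r ^ m)) \<le> c m * r' ^ m"
      using c_nonneg r by (simp add: mult_left_mono)
  qed
  moreover have "(\<lambda>m. c m * (of_nat (Suc m) * r ^ m)) = (\<lambda>m. c m * (of_nat m * r ^ m) + c m * r ^ m)"
    by (simp add: algebra_simps)
  ultimately show ?thesis using summable_add[OF _ summable_below_conv_radius[OF r]] by simp
qed

section \<open>Even and odd parts of a binomial expansion\<close>

definition binomial_part :: "(nat \<Rightarrow> bool) \<Rightarrow> nat \<Rightarrow> 'a::comm_semiring_1 \<Rightarrow> 'a \<Rightarrow> 'a" where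
  "binomial_part P m x y = (\<Sum>k | k \<le> m \<and> P k. of_nat (m choose k) * x ^ (m - k) * y ^ k)"

lemma binomial_even_odd: "(x + y) ^ m = binomial_part even m x y + binomial_part odd m x y"
proof -
  have "{..m} = {k. k \<le> m \<and> even k} \<union> {k. k \<le> m \<and> odd k}" by auto
  then have "(x + y) ^ m = (\<Sum>k\<in>{k. k \<le> m \<and> even k} \<union> {k. k \<le> m \<and> odd k}.
      of_nat (m choose k) * x ^ (m - k) * y ^ k)"
    using binomial_ring[of y x m] by (simp add: add.commute mult_ac)
  also have "\<dots> = binomial_part even m x y + binomial_part odd m x y"
    unfolding binomial_part_def by (rule sum.union_disjoint) auto
  finally show ?thesis .
qed

lemma binomial_even_minus_odd:
  "(x - y :: 'a::comm_ring_1) ^ m = binomial_part even m x y - binomial_part odd m x y"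
proof -
  have "binomial_part even m x (- y) = binomial_part even m x y"
    "binomial_part odd m x (- y) = - binomial_part odd m x y"
    unfolding binomial_part_def by (auto simp flip: sum_negf intro: sum.cong)
  then show ?thesis using binomial_even_odd[of x "- y" m] by simp
qed

lemma binomial_part_even_eq:
  "binomial_part even m x y = (\<Sum>h\<le>m div 2. of_nat (m choose (2*h)) * x ^ (m - 2*h) * y ^ (2*h))"
  unfolding binomial_part_def
  by (rule sum.reindex_cong[of "\<lambda>h. 2 * h"]) (auto simp: inj_on_def elim!: evenE)

lemma binomial_part_odd_eq:
  "binomial_part odd m x y
     = (\<Sum>h\<in>{1..(m+1) div 2}. of_nat (m choose (2*h - 1)) * x ^ (m + 1 - 2*h) * y ^ (2*h - 1))"
  unfolding binomial_part_def
proof (rule sum.reindex_cong[of "\<lambda>h. 2 * h - 1"])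
  show "{k. k \<le> m \<and> odd k} = (\<lambda>h. 2 * h - 1) ` {1..(m + 1) div 2}"
    by (auto elim!: oddE intro!: image_eqI[where x = "Suc _"])
qed (auto simp: inj_on_def Suc_diff_le)

lemma Re_ser_eq: "Re_ser emb a l m = emb (a m) * binomial_part even m (emb (HK emb l)) (VK emb l)"
  by (simp add: Re_ser_def binomial_part_even_eq)

lemma Im_ser_eq: "Im_ser emb a l m = emb (a m) * binomial_part odd m (emb (HK emb l)) (VK emb l)"
  by (simp add: Im_ser_def binomial_part_odd_eq)

lemma (in absval) av_binomial_part_le: "av (binomial_part P m x y) \<le> (av x + av y) ^ m"
proof -
  have "av (binomial_part P m x y)
      \<le> (\<Sum>k | k \<le> m \<and> P k. of_nat (m choose k) * av x ^ (m - k) * av y ^ k)"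
    unfolding binomial_part_def
    by (rule order.trans[OF av_sum_le sum_mono]) (simp add: av_of_nat_le mult_right_mono)
  also have "\<dots> \<le> (\<Sum>k\<le>m. of_nat (m choose k) * av x ^ (m - k) * av y ^ k)"
    by (rule sum_mono2) auto
  also have "\<dots> = (av x + av y) ^ m"
    using binomial_ring[of "av y" "av x" m] by (simp add: add.commute mult_ac)
  finally show ?thesis .
qed

lemma (in absval) av_binomial_part_le_nonarch:
  assumes "\<And>n. av (of_nat n) \<le> 1"
  shows "av (binomial_part P m x y) \<le> of_nat (Suc m) * max (av x) (av y) ^ m"
proof -
  let ?r = "max (av x) (av y)"
  have "0 \<le> ?r" by (simp add: le_max_iff_disj)
  have "av (of_nat (m choose k) * x ^ (m - k) * y ^ k) \<le> ?r ^ m" if "k \<le> m" for k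
  proof -
    have "av x ^ (m - k) * av y ^ k \<le> ?r ^ (m - k) * ?r ^ k"
      using \<open>0 \<le> ?r\<close> by (intro mult_mono power_mono) auto
    also have "\<dots> = ?r ^ m" using that by (simp flip: power_add)
    finally show ?thesis using assms[of "m choose k"]
      by (simp add: mult.assoc mult_le_one order.trans[OF mult_right_mono])
  qed
  then have "av (binomial_part P m x y) \<le> (\<Sum>k | k \<le> m \<and> P k. ?r ^ m)"
    unfolding binomial_part_def by (intro order.trans[OF av_sum_le sum_mono]) auto
  also have "\<dots> \<le> (\<Sum>k\<le>m. ?r ^ m)" using \<open>0 \<le> ?r\<close> by (intro sum_mono2) auto
  finally show ?thesis by simp
qed

context quad_closed_emb
begin

lemma power_ii_even: "even k \<Longrightarrow> ii ^ k = emb ((-1) ^ (k div 2))"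
  by (auto elim!: evenE simp: power_mult power2_eq_square ii_sq)

lemma binomial_part_even_in_range:
  "binomial_part even m (emb x) (ii * emb y) \<in> range emb"
  unfolding binomial_part_def
proof (rule sum_in_range_emb)
  fix k assume "k \<in> {k. k \<le> m \<and> even k}"
  then have "(ii * emb y) ^ k = emb ((-1) ^ (k div 2) * y ^ k)"
    using power_ii_even by (simp add: power_mult_distrib)
  then have "of_nat (m choose k) * emb x ^ (m - k) * (ii * emb y) ^ k
      = emb (of_nat (m choose k) * x ^ (m - k) * ((-1) ^ (k div 2) * y ^ k))"
    by simp
  then show "of_nat (m choose k) * emb x ^ (m - k) * (ii * emb y) ^ k \<in> range emb"
    by (rule image_eqI[OF _ UNIV_I])
qed

lemma binomial_part_odd_in_range:
  "- ii * binomial_part odd m (emb x) (ii * emb y) \<in> range emb"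
  unfolding binomial_part_def sum_distrib_left
proof (rule sum_in_range_emb)
  fix k assume "k \<in> {k. k \<le> m \<and> odd k}"
  then have "- ii * (ii * emb y) ^ k = emb (- ((-1) ^ (Suc k div 2)) * y ^ k)"
    using power_ii_even[of "Suc k"] by (simp add: power_mult_distrib mult.assoc[symmetric])
  then have "- ii * (of_nat (m choose k) * emb x ^ (m - k) * (ii * emb y) ^ k)
      = emb (of_nat (m choose k) * x ^ (m - k) * (- ((-1) ^ (Suc k div 2)) * y ^ k))"
    by (simp add: mult.left_commute[of ii])
  then show "- ii * (of_nat (m choose k) * emb x ^ (m - k) * (ii * emb y) ^ k) \<in> range emb"
    by (rule image_eqI[OF _ UNIV_I])
qed

end

section \<open>Diagonal matrices and similarity\<close>

definition diag_mat :: "('n::finite \<Rightarrow> 'a::zero) \<Rightarrow> 'a^'n^'n" where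
  "diag_mat f = (\<chi> i j. if i = j then f i else 0)"

lemma matrix_mult_diag_mat_nth: "(P ** diag_mat f) $ i $ j = P $ i $ j * (f j :: 'a::semiring_1)"
proof -
  have "(P ** diag_mat f) $ i $ j = (\<Sum>k\<in>UNIV. P $ i $ k * (if k = j then f k else 0))"
    by (simp add: matrix_matrix_mult_def diag_mat_def)
  also have "\<dots> = (\<Sum>k\<in>UNIV. if k = j then P $ i $ j * f j else 0)"
    by (rule sum.cong) auto
  finally show ?thesis by simp
qed

lemma diag_mat_mult:
  "diag_mat f ** diag_mat g = diag_mat (\<lambda>i. f i * (g i :: 'a::semiring_1))"
  by (simp add: vec_eq_iff matrix_mult_diag_mat_nth) (simp add: diag_mat_def)

lemma mat_eq_diag_mat: "mat c = diag_mat (\<lambda>i. c)"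
  by (simp add: vec_eq_iff diag_mat_def mat_def)

lemma (in field_emb) mapM_mult: "mapM emb (X ** Y) = mapM emb X ** mapM emb Y"
  by (simp add: vec_eq_iff mapM_def matrix_matrix_mult_def)

lemma (in field_emb) mapM_mpow: "mapM emb (mpow X k) = mpow (mapM emb X) k"
  by (induction k) (simp_all add: mapM_mult, simp add: vec_eq_iff mapM_def mat_def)

lemma (in field_emb) mapM_smat: "mapM emb (smat c X) = smat (emb c) (mapM emb X)"
  by (simp add: vec_eq_iff mapM_def smat_def)

lemma (in field_emb) mapM_sum: "mapM emb (sum F S) = (\<Sum>s\<in>S. mapM emb (F s))"
  by (simp add: vec_eq_iff mapM_def)

lemma (in field_emb) mapM_peval: "mapM emb (peval p X) = peval (map_poly emb p) (mapM emb X)"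
  by (simp add: peval_def mapM_sum mapM_smat mapM_mpow)

locale similarity =
  fixes P Q :: "'a::field^'n^'n"
  assumes PQ: "P ** Q = mat 1" and QP: "Q ** P = mat 1"
begin

(* The matrix acting as multiplication by f k on the k-th column of P; f \<mapsto> dconj f is a ring
   homomorphism from pointwise functions to matrices. *)
definition dconj :: "('n \<Rightarrow> 'a) \<Rightarrow> 'a^'n^'n" where
  "dconj f = P ** diag_mat f ** Q"

lemma dconj_nth: "dconj f $ i $ j = (\<Sum>k\<in>UNIV. P $ i $ k * f k * Q $ k $ j)"
  by (simp add: dconj_def matrix_matrix_mult_def[of "P ** diag_mat f"] matrix_mult_diag_mat_nth)

lemma dconj_add: "dconj f + dconj g = dconj (\<lambda>k. f k + g k)"
  and dconj_diff: "dconj f - dconj g = dconj (\<lambda>k. f k - g k)"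
  and smat_dconj: "smat c (dconj f) = dconj (\<lambda>k. c * f k)"
  by (simp_all add: vec_eq_iff dconj_nth smat_def algebra_simps sum.distrib sum_subtractf
      sum_distrib_left)

lemma dconj_zero: "dconj (\<lambda>k. 0) = 0"
  by (simp add: vec_eq_iff dconj_nth)

lemma dconj_sum: "(\<Sum>s\<in>S. dconj (F s)) = dconj (\<lambda>k. \<Sum>s\<in>S. F s k)"
  by (induction S rule: infinite_finite_induct) (simp_all add: dconj_add dconj_zero)

lemma dconj_mult: "dconj f ** dconj g = dconj (\<lambda>k. f k * g k)"
proof -
  have "dconj f ** dconj g = P ** diag_mat f ** (Q ** P) ** diag_mat g ** Q"
    by (simp only: dconj_def matrix_mul_assoc)
  also have "\<dots> = P ** (diag_mat f ** diag_mat g) ** Q"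
    by (simp only: QP matrix_mul_rid matrix_mul_assoc)
  finally show ?thesis by (simp add: dconj_def diag_mat_mult)
qed

lemma dconj_const: "dconj (\<lambda>k. c) = mat c"
proof -
  have "dconj (\<lambda>k. c) = smat c (dconj (\<lambda>k. 1))" by (simp add: smat_dconj)
  also have "dconj (\<lambda>k. 1) = mat 1" by (simp add: dconj_def PQ flip: mat_eq_diag_mat)
  finally show ?thesis by (simp add: vec_eq_iff smat_def mat_def)
qed

lemma mpow_dconj: "mpow (dconj f) m = dconj (\<lambda>k. f k ^ m)"
  by (induction m) (simp_all add: dconj_const dconj_mult)

lemma peval_dconj: "peval p (dconj f) = dconj (\<lambda>k. poly p (f k))"
  by (simp add: peval_def mpow_dconj smat_dconj dconj_sum poly_altdef mult_ac)

lemma dconj_eq_iff: "dconj f = dconj g \<longleftrightarrow> f = g"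
proof
  have "Q ** dconj h ** P = (Q ** P) ** diag_mat h ** (Q ** P)" for h
    by (simp only: dconj_def matrix_mul_assoc)
  then have "Q ** dconj h ** P = diag_mat h" for h by (simp add: QP)
  moreover assume "dconj f = dconj g"
  ultimately have "diag_mat f = diag_mat g" by metis
  then show "f = g" by (simp add: vec_eq_iff diag_mat_def fun_eq_iff) (metis (full_types))
qed simp

lemma det_dconj: "det (dconj f) = (\<Prod>k\<in>UNIV. f k)"
proof -
  have "det P * det Q = 1" using PQ by (metis det_I det_mul)
  then have "det (dconj f) = det (diag_mat f)"
    by (simp add: dconj_def det_mul mult_ac)
  then show ?thesis by (simp add: det_diagonal diag_mat_def)
qed

end

lemma semisimple_diagonalization:
  assumes "semisimple emb M"
  obtains P Q :: "'a::field^'n^'n" and d where "P ** Q = mat 1" "Q ** P = mat 1"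
    "mapM emb M = P ** diag_mat d ** Q"
proof -
  obtain P :: "'a^'n^'n" where P: "invertible P" "diagonal_mat (matrix_inv P ** mapM emb M ** P)"
    using assms unfolding semisimple_def by blast
  define Q where "Q = matrix_inv P"
  have PQ: "P ** Q = mat 1 \<and> Q ** P = mat 1"
    using P(1) unfolding Q_def matrix_inv_def invertible_def by (rule someI_ex)
  define d where "d k = (Q ** mapM emb M ** P) $ k $ k" for k
  have "Q ** mapM emb M ** P = diag_mat d"
    using P(2) unfolding diagonal_mat_def Q_def[symmetric] by (simp add: vec_eq_iff diag_mat_def d_def)
  then have "P ** diag_mat d ** Q = P ** (Q ** mapM emb M ** P) ** Q" by simp
  also have "\<dots> = (P ** Q) ** mapM emb M ** (P ** Q)" by (simp only: matrix_mul_assoc)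
  finally have "mapM emb M = P ** diag_mat d ** Q" using PQ by simp
  with PQ that show ?thesis by blast
qed

locale diagonalization = field_emb emb + similarity P Q
  for emb :: "'k::field_char_0 \<Rightarrow> 'a::field" and P Q :: "'a^'n^'n" +
  fixes M :: "'k^'n^'n" and d :: "'n \<Rightarrow> 'a"
  assumes M_diag: "mapM emb M = dconj d"
begin

lemma eigs_eq: "eigs emb M = range d"
proof -
  have "mat z - mapM emb M = dconj (\<lambda>k. z - d k)" for z
    by (simp add: M_diag dconj_diff flip: dconj_const)
  then show ?thesis by (auto simp: eigs_def det_dconj)
qed

lemma finite_eigs: "finite (eigs emb M)"
  by (simp add: eigs_eq)

lemma peval_eq_0_iff: "peval p M = 0 \<longleftrightarrow> (\<forall>k. poly_emb p (d k) = 0)"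
proof -
  have "peval p M = 0 \<longleftrightarrow> mapM emb (peval p M) = 0"
    by (simp add: vec_eq_iff mapM_def)
  also have "mapM emb (peval p M) = dconj (\<lambda>k. poly_emb p (d k))"
    by (simp add: mapM_peval M_diag peval_dconj poly_emb_def)
  also have "dconj (\<lambda>k. poly_emb p (d k)) = 0 \<longleftrightarrow> (\<forall>k. poly_emb p (d k) = 0)"
    by (simp only: dconj_zero[symmetric] dconj_eq_iff fun_eq_iff)
  finally show ?thesis .
qed

definition char_poly :: "'k poly" where
  "char_poly = det (\<chi> i j. (if i = j then [:0, 1:] else 0) - [:M $ i $ j:])"

lemma poly_emb_char_poly: "poly_emb char_poly z = (\<Prod>k\<in>UNIV. z - d k)"
proof -
  have "(\<chi> i j. poly_emb ((if i = j then [:0, 1:] else 0) - [:M $ i $ j:]) z) = mat z - mapM emb M"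
    by (simp add: vec_eq_iff mat_def mapM_def)
  also have "\<dots> = dconj (\<lambda>k. z - d k)"
    by (simp add: M_diag dconj_diff flip: dconj_const)
  finally show ?thesis
    unfolding char_poly_def poly_emb_det by (simp add: det_dconj)
qed

lemma char_poly_nonzero: "char_poly \<noteq> 0"
proof
  have "inj (\<lambda>n::nat. emb (of_nat n))"
    by (rule injI) (simp del: emb_of_nat)
  then have "infinite (UNIV :: 'a set)"
    using infinite_super[OF subset_UNIV range_inj_infinite] by simp
  moreover have "finite (range d)" by simp
  ultimately obtain z where z: "z \<notin> range d" using ex_new_if_finite by blast
  assume "char_poly = 0"
  then have "(\<Prod>k\<in>UNIV. z - d k) = 0" using poly_emb_char_poly[of z] by simp
  then show False using z by (auto simp: prod_zero_iff)
qed

lemma char_poly_root: "poly_emb char_poly (d k) = 0"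
  unfolding poly_emb_char_poly by (intro prod_zero) auto

lemma min_annihilator_unique:
  assumes p: "lead_coeff p = 1" "peval p M = 0" and p': "lead_coeff p' = 1" "peval p' M = 0"
    and min: "\<And>q. q \<noteq> 0 \<Longrightarrow> peval q M = 0 \<Longrightarrow> degree p \<le> degree q"
    and deg: "degree p' = degree p"
  shows "p' = p"
proof (rule ccontr)
  assume "p' \<noteq> p"
  then have "p' - p \<noteq> 0" by simp
  moreover have "peval (p' - p) M = 0" using p p' by (simp add: peval_eq_0_iff)
  moreover have "degree (p' - p) < degree p"
  proof -
    have "coeff (p' - p) (degree p) = 0" using p(1) p'(1) deg by simp
    moreover have "degree (p' - p) \<le> degree p" by (rule degree_diff_le) (simp_all add: deg)
    ultimately show ?thesis using \<open>p' - p \<noteq> 0\<close> by (metis le_neq_implies_less leading_coeff_0_iff)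
  qed
  ultimately show False using min[of "p' - p"] by simp
qed

lemma minpoly_spec: "lead_coeff (minpoly M) = 1" "peval (minpoly M) M = 0"
proof -
  let ?ann = "\<lambda>q. q \<noteq> 0 \<and> peval q M = 0"
  let ?q = "arg_min degree ?ann"
  have "?ann char_poly" using char_poly_nonzero char_poly_root by (simp add: peval_eq_0_iff)
  then have q: "?ann ?q" and q_min: "\<And>q. ?ann q \<Longrightarrow> degree ?q \<le> degree q"
    using arg_min_nat_lemma[of ?ann char_poly degree] by auto
  define p where "p = smult (inverse (lead_coeff ?q)) ?q"
  have p: "lead_coeff p = 1" "peval p M = 0" "degree p = degree ?q"
    using q by (simp_all add: p_def peval_eq_0_iff)
  have "minpoly M = p"
    unfolding minpoly_def
  proof (rule the_equality)
    show "lead_coeff p = 1 \<and> peval p M = 0 \<and> (\<forall>q. q \<noteq> 0 \<longrightarrow> peval q M = 0 \<longrightarrow> degree p \<le> degree q)"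
      using p q_min by simp
    fix p' assume p': "lead_coeff p' = 1 \<and> peval p' M = 0
      \<and> (\<forall>q. q \<noteq> 0 \<longrightarrow> peval q M = 0 \<longrightarrow> degree p' \<le> degree q)"
    have "p \<noteq> 0" "p' \<noteq> 0" using p(1) p' by auto
    then have "degree p' \<le> degree p" "degree p \<le> degree p'"
      using p p' q_min[of p'] by auto
    then show "p' = p" using p p' q_min by (intro min_annihilator_unique) auto
  qed
  then show "lead_coeff (minpoly M) = 1" "peval (minpoly M) M = 0" using p by simp_all
qed

lemma eigenvalue_mpK:
  assumes "e \<in> range d"
  shows "lead_coeff (mpK emb e) = 1" "irreducible (mpK emb e)" "poly_emb (mpK emb e) e = 0"
    and "mpK emb e dvd minpoly M" "mpK emb e dvd char_poly"
proof -
  have roots: "poly_emb (minpoly M) e = 0" "poly_emb char_poly e = 0"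
    using assms minpoly_spec(2) char_poly_root by (auto simp: peval_eq_0_iff)
  moreover have "minpoly M \<noteq> 0" using minpoly_spec(1) by auto
  ultimately obtain p where p: "lead_coeff p = 1" "irreducible p" "poly_emb p e = 0"
    using ex_monic_irreducible_root by blast
  then show "lead_coeff (mpK emb e) = 1" "irreducible (mpK emb e)" "poly_emb (mpK emb e) e = 0"
    and "mpK emb e dvd minpoly M" "mpK emb e dvd char_poly"
    using roots by (simp_all add: mpK_eqI irreducible_root_dvd)
qed

lemma frob_cov_eq: "frob_cov emb M \<mu> = dconj (\<lambda>k. if d k = \<mu> then 1 else 0)"
proof -
  have covariant: "poly (\<Prod>\<nu>\<in>eigs emb M - {\<mu>}. smult (1 / (\<mu> - \<nu>)) [:- \<nu>, 1:]) (d k)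
      = (if d k = \<mu> then 1 else 0)" for k
  proof -
    have "poly (\<Prod>\<nu>\<in>eigs emb M - {\<mu>}. smult (1 / (\<mu> - \<nu>)) [:- \<nu>, 1:]) (d k)
        = (\<Prod>\<nu>\<in>eigs emb M - {\<mu>}. (d k - \<nu>) / (\<mu> - \<nu>))"
      by (simp add: poly_prod diff_divide_distrib)
    also have "\<dots> = (if d k = \<mu> then 1 else 0)"
    proof (cases "d k = \<mu>")
      case False
      then have "d k \<in> eigs emb M - {\<mu>}" by (simp add: eigs_eq)
      then show ?thesis using False finite_eigs by (auto simp: prod_zero_iff)
    qed (auto intro!: prod.neutral split: if_splits)
    finally show ?thesis .
  qed
  show ?thesis by (simp only: frob_cov_def M_diag peval_dconj covariant)
qed

end

locale quadratic_diagonalization = diagonalization emb P Q M d + quad_closed_emb emb ii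
  for emb :: "'k::linordered_field \<Rightarrow> 'a::field" and P Q M d ii +
  assumes M_split: "splitting_bound_le M 2"
begin

lemma eigenvalue_outside_K:
  assumes e: "e \<in> range d" and nK: "e \<notin> range emb"
  shows "\<exists>y. y \<noteq> 0 \<and> VK emb e = ii * emb y"
    and "conjK emb ii e \<in> range d" "conjK emb ii e \<notin> range emb"
    and "ImK emb ii (conjK emb ii e) = - ImK emb ii e"
    and "conjK emb ii (conjK emb ii e) = e"
proof -
  let ?p = "mpK emb e"
  note p = eigenvalue_mpK[OF e]
  have "degree ?p \<le> 2" using M_split p(2,4) by (simp add: splitting_bound_le_def)
  moreover have "?p \<noteq> 0" using p(1) by auto
  then have "degree ?p \<noteq> 0" using degree_pos_if_poly_emb_root p(3) by blast
  moreover have "degree ?p \<noteq> 1"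
  proof
    assume "degree ?p = 1"
    then have "e = emb (- coeff ?p 0)"
      using p(1,3) by (simp add: poly_emb_altdef eq_neg_iff_add_eq_0 add.commute)
    then show False using nK by blast
  qed
  ultimately have p2: "degree ?p = 2" by linarith
  show "\<exists>y. y \<noteq> 0 \<and> VK emb e = ii * emb y"
    using quadratic_VK[OF p(1,2) p2 p(3) nK] by metis
  obtain r where "char_poly = ?p * r" using p(5) by (elim dvdE)
  then have "poly_emb char_poly (conjK emb ii e) = 0"
    using quadratic_conjK(1)[OF p(1,2) p2 p(3) nK] by simp
  then show "conjK emb ii e \<in> range d" by (auto simp: poly_emb_char_poly prod_zero_iff)
  show "conjK emb ii e \<notin> range emb" "ImK emb ii (conjK emb ii e) = - ImK emb ii e"
    "conjK emb ii (conjK emb ii e) = e"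
    using quadratic_conjK[OF p(1,2) p2 p(3) nK] by simp_all
qed

end

section \<open>Convergence of f at a point and of its real and imaginary parts\<close>

locale series_setting = quad_closed_emb emb ii + absval av
  for emb :: "'k::linordered_field \<Rightarrow> 'a::field" and ii :: 'a and av :: "'a \<Rightarrow> real" +
  fixes a :: "nat \<Rightarrow> 'k"
  assumes complete: "av_complete av"
begin

lemma summable_av_below_Rf:
  assumes "ereal r < Rf emb av a" "0 \<le> r"
  shows "summable (\<lambda>m. av (emb (a m)) * r ^ m)"
  using summable_below_conv_radius assms by (simp add: Rf_def)

lemma fK_sums:
  assumes "ereal (av z) < Rf emb av a"
  shows "av_sums av (\<lambda>m. emb (a m) * z ^ m) (fK emb av a z)"
  unfolding fK_def using summable_av_below_Rf[OF assms] by (intro av_sums_if_summable_av complete) simp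

lemma fK_in_Kc:
  assumes "ereal (av z) < Rf emb av a" and "z \<in> range emb"
  shows "fK emb av a z \<in> Kc emb av"
proof -
  obtain x where "z = emb x" using assms(2) by blast
  then have "(\<Sum>m<N. emb (a m) * z ^ m) = emb (\<Sum>m<N. a m * x ^ m)" for N by simp
  then have "(\<Sum>m<N. emb (a m) * z ^ m) \<in> range emb" for N by (rule image_eqI[OF _ UNIV_I])
  then show ?thesis by (rule av_sums_in_Kc[OF fK_sums[OF assms(1)]])
qed

(* The quantity that the definition of Omega-hat bounds by R_f. *)
definition HV_norm :: "'a \<Rightarrow> real" where
  "HV_norm l = (if nonarch emb av then max (av (emb (HK emb l))) (av (VK emb l))
                else av (emb (HK emb l)) + av (VK emb l))"

lemma summable_av_binomial_part:
  assumes "ereal (HV_norm l) < Rf emb av a"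
  shows "summable (\<lambda>m. av (emb (a m) * binomial_part P m (emb (HK emb l)) (VK emb l)))"
proof (cases "nonarch emb av")
  case True
  \<comment> \<open>Only the maximum is below R_f here, but binomial coefficients have absolute value at most 1.\<close>
  let ?r = "max (av (emb (HK emb l))) (av (VK emb l))"
  have "summable (\<lambda>m. av (emb (a m)) * (of_nat (Suc m) * ?r ^ m))"
    using assms True by (intro summable_Suc_times_below_conv_radius) (auto simp: HV_norm_def Rf_def le_max_iff_disj)
  then show ?thesis
  proof (rule summable_comparison_test'[where N = 0])
    fix m
    show "norm (av (emb (a m) * binomial_part P m (emb (HK emb l)) (VK emb l)))
        \<le> av (emb (a m)) * (of_nat (Suc m) * ?r ^ m)"
      using av_binomial_part_le_nonarch nonarch_av_of_nat_le_1[OF field_emb_axioms absval_axioms True]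
      by (simp add: mult_left_mono)
  qed
next
  case False
  let ?r = "av (emb (HK emb l)) + av (VK emb l)"
  have "summable (\<lambda>m. av (emb (a m)) * ?r ^ m)"
    using assms False by (intro summable_av_below_Rf) (auto simp: HV_norm_def)
  then show ?thesis
    by (rule summable_comparison_test'[where N = 0]) (simp add: av_binomial_part_le mult_left_mono)
qed

lemma Re_ser_sums:
  "ereal (HV_norm l) < Rf emb av a \<Longrightarrow> av_sums av (Re_ser emb a l) (Ref emb av a l)"
  unfolding Ref_def Re_ser_eq[abs_def]
  by (intro av_sums_if_summable_av complete summable_av_binomial_part)

lemma Im_ser_sums:
  "ereal (HV_norm l) < Rf emb av a \<Longrightarrow> av_sums av (Im_ser emb a l) (ii * Imf emb av ii a l)"
  unfolding Imf_def Im_ser_eq[abs_def] mult.assoc[symmetric]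
  by (simp add: ii_sq) (intro av_sums_if_summable_av complete summable_av_binomial_part)

lemma fK_eq_Ref_Imf:
  assumes "ereal (HV_norm l) < Rf emb av a"
  shows "fK emb av a l = Ref emb av a l + ii * Imf emb av ii a l"
proof -
  have "emb (a m) * l ^ m = Re_ser emb a l m + Im_ser emb a l m" for m
    using binomial_even_odd[of "emb (HK emb l)" "VK emb l" m]
    by (simp add: Re_ser_eq Im_ser_eq VK_def distrib_left)
  then show ?thesis unfolding fK_def
    using av_sums_add[OF Re_ser_sums[OF assms] Im_ser_sums[OF assms]] by (simp add: av_suminf_eqI)
qed

lemma fK_conj_eq_Ref_Imf:
  assumes "ereal (HV_norm l) < Rf emb av a"
  shows "fK emb av a (emb (HK emb l) - VK emb l) = Ref emb av a l - ii * Imf emb av ii a l"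
proof -
  have "emb (a m) * (emb (HK emb l) - VK emb l) ^ m = Re_ser emb a l m + (-1) * Im_ser emb a l m" for m
    using binomial_even_minus_odd[of "emb (HK emb l)" "VK emb l" m]
    by (simp add: Re_ser_eq Im_ser_eq right_diff_distrib)
  then show ?thesis unfolding fK_def
    using av_sums_add[OF Re_ser_sums[OF assms] av_sums_cmult[OF Im_ser_sums[OF assms], of "-1"]]
    by (simp add: av_suminf_eqI)
qed

lemma Ref_in_Kc:
  assumes "ereal (HV_norm l) < Rf emb av a" and "VK emb l = ii * emb y"
  shows "Ref emb av a l \<in> Kc emb av"
  using Re_ser_sums[OF assms(1)] assms(2)
  by (intro av_sums_in_Kc)
    (auto simp: Re_ser_eq intro!: sum_in_range_emb mult_in_range_emb binomial_part_even_in_range)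

lemma Imf_in_Kc:
  assumes "ereal (HV_norm l) < Rf emb av a" and "VK emb l = ii * emb y"
  shows "Imf emb av ii a l \<in> Kc emb av"
proof (rule av_sums_in_Kc)
  show "av_sums av (\<lambda>m. - ii * Im_ser emb a l m) (Imf emb av ii a l)"
    using av_sums_cmult[OF Im_ser_sums[OF assms(1)], of "- ii"] by (simp add: mult.assoc[symmetric] ii_sq)
  have "- ii * Im_ser emb a l m \<in> range emb" for m
    using mult_in_range_emb[OF rangeI binomial_part_odd_in_range, of "a m"] assms(2)
    by (simp add: Im_ser_eq mult.left_commute)
  then show "(\<Sum>m<N. - ii * Im_ser emb a l m) \<in> range emb" for N
    by (intro sum_in_range_emb)
qed

end

section \<open>The functional calculus for semisimple matrices\<close>

lemma sum_eq_single:
  assumes "finite S" "x \<in> S" "\<And>z. z \<in> S \<Longrightarrow> z \<noteq> x \<Longrightarrow> f z = 0"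
  shows "sum f S = f x"
  using sum.mono_neutral_right[of S "{x}" f] assms by auto

locale functional_calculus = quadratic_diagonalization emb P Q M d ii + series_setting emb ii av a
  for emb :: "'k::linordered_field \<Rightarrow> 'a::field" and P Q M d ii av a +
  assumes M_Omega: "M \<in> Omega_hat emb av a"
begin

lemma eigenvalue_in_disc: "e \<in> range d \<Longrightarrow> ereal (av e) < Rf emb av a"
proof -
  assume "e \<in> range d"
  then have "ereal (av e) \<le> ereal (spec_rad emb av M)"
    unfolding spec_rad_def eigs_eq by (simp add: Max_ge)
  moreover have "ereal (spec_rad emb av M) < Rf emb av a" using M_Omega by (simp add: Omega_hat_def)
  ultimately show ?thesis by (rule le_less_trans)
qed

lemma zero_in_disc: "ereal (av 0) < Rf emb av a"
  using eigenvalue_in_disc[of "d undefined"] by (auto intro: le_less_trans[rotated])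

lemma eigenvalue_HV_norm:
  assumes "e \<in> range d"
  shows "ereal (HV_norm e) < Rf emb av a"
proof -
  have "if nonarch emb av then ereal (max (av (emb (HK emb e))) (av (VK emb e))) < Rf emb av a
      else ereal (av (emb (HK emb e)) + av (VK emb e)) < Rf emb av a"
    using M_Omega[unfolded Omega_hat_def mem_Collect_eq eigs_eq] assms by blast
  then show ?thesis by (cases "nonarch emb av") (simp_all only: HV_norm_def if_True if_False)
qed

lemma Lam_eigenvalue:
  "l \<in> Lam emb ii M \<Longrightarrow> l \<in> range d \<and> l \<notin> range emb \<and> 0 < ImK emb ii l"
  unfolding Lam_def eigs_eq by blast

lemma Gam_summable_in_Kc:
  assumes "g \<in> insert 0 (Gam emb M)"
  shows "av_summable av (\<lambda>m. emb (a m) * g ^ m) \<and> fK emb av a g \<in> Kc emb av"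
proof -
  have "ereal (av g) < Rf emb av a" "g \<in> range emb"
    using assms zero_in_disc eigenvalue_in_disc by (auto simp: Gam_def eigs_eq intro: image_eqI[of 0 emb 0])
  then show ?thesis unfolding av_summable_def using fK_sums fK_in_Kc by blast
qed

lemma Lam_summable_in_Kc:
  assumes "l \<in> Lam emb ii M"
  shows "av_summable av (Re_ser emb a l) \<and> Ref emb av a l \<in> Kc emb av
    \<and> av_summable av (Im_ser emb a l) \<and> Imf emb av ii a l \<in> Kc emb av"
proof -
  have l: "l \<in> range d" "l \<notin> range emb" using Lam_eigenvalue[OF assms] by auto
  then obtain y where "VK emb l = ii * emb y" using eigenvalue_outside_K(1) by blast
  then show ?thesis unfolding av_summable_def
    using eigenvalue_HV_norm[OF l(1)] Re_ser_sums Im_ser_sums Ref_in_Kc Imf_in_Kc by blast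
qed

(* B_weight l e and rhs_weight e are the scalars by which B(l) and the right-hand side of the
   claimed identity act on the eigenspace of e, see Bmat_eq and rhs_eq_dconj. *)
definition B_weight :: "'a \<Rightarrow> 'a \<Rightarrow> 'a" where
  "B_weight l e = ii * ((if e = l then 1 else 0) - (if e = conjK emb ii l then 1 else 0))"

lemma Bmat_eq: "Bmat emb ii M l = dconj (\<lambda>k. B_weight l (d k))"
  by (simp add: Bmat_def frob_cov_eq dconj_diff smat_dconj B_weight_def)

definition rhs_weight :: "'a \<Rightarrow> 'a" where
  "rhs_weight e = fK emb av a 0 * (1 - (\<Sum>g\<in>Gam emb M. if e = g then 1 else 0)
        + (\<Sum>l\<in>Lam emb ii M. B_weight l e * B_weight l e))
     + (\<Sum>g\<in>Gam emb M. fK emb av a g * (if e = g then 1 else 0))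
     - (\<Sum>l\<in>Lam emb ii M. Ref emb av a l * (B_weight l e * B_weight l e))
     + (\<Sum>l\<in>Lam emb ii M. Imf emb av ii a l * B_weight l e)"

lemma rhs_eq_dconj:
  "smat (fK emb av a 0) (A0mat emb ii M)
      + (\<Sum>g\<in>Gam emb M. smat (fK emb av a g) (Amat emb M g))
      - (\<Sum>l\<in>Lam emb ii M. smat (Ref emb av a l) (Bmat emb ii M l ** Bmat emb ii M l))
      + (\<Sum>l\<in>Lam emb ii M. smat (Imf emb av ii a l) (Bmat emb ii M l))
   = dconj (\<lambda>k. rhs_weight (d k))"
  unfolding A0mat_def Amat_def frob_cov_eq Bmat_eq rhs_weight_def dconj_const[of 1, symmetric]
  by (simp only: dconj_mult smat_dconj dconj_sum dconj_add dconj_diff)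

lemma Lam_conj:
  assumes "l \<in> Lam emb ii M"
  shows "conjK emb ii l \<notin> range emb" "conjK emb ii l \<notin> Lam emb ii M"
    and "conjK emb ii (conjK emb ii l) = l"
proof -
  have l: "l \<in> range d" "l \<notin> range emb" "0 < ImK emb ii l" using Lam_eigenvalue[OF assms] by auto
  show "conjK emb ii l \<notin> range emb" "conjK emb ii (conjK emb ii l) = l"
    using eigenvalue_outside_K[OF l(1,2)] by simp_all
  show "conjK emb ii l \<notin> Lam emb ii M"
  proof
    assume "conjK emb ii l \<in> Lam emb ii M"
    then have "0 < ImK emb ii (conjK emb ii l)" using Lam_eigenvalue by blast
    then show False using eigenvalue_outside_K(4)[OF l(1,2)] l(3) by simp
  qed
qed

lemma finite_Lam: "finite (Lam emb ii M)"
  using finite_eigs by (simp add: Lam_def)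

lemma finite_Gam: "finite (Gam emb M)"
  using finite_eigs by (simp add: Gam_def)

lemma sums_Gam_outside_K:
  assumes "e \<notin> range emb"
  shows "(\<Sum>g\<in>Gam emb M. if e = g then 1 else (0 :: 'a)) = 0"
    and "(\<Sum>g\<in>Gam emb M. fK emb av a g * (if e = g then 1 else 0)) = 0"
  using assms by (auto simp: Gam_def intro!: sum.neutral)

lemma sum_Lam_B_weight_in_K:
  assumes "e \<in> range emb" "\<And>l. h l 0 = 0"
  shows "(\<Sum>l\<in>Lam emb ii M. h l (B_weight l e)) = 0"
proof (intro sum.neutral ballI)
  fix l assume "l \<in> Lam emb ii M"
  then have "e \<noteq> l" "e \<noteq> conjK emb ii l"
    using assms(1) Lam_eigenvalue Lam_conj(1) by blast+
  then show "h l (B_weight l e) = 0" using assms(2) by (simp add: B_weight_def)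
qed

lemma sum_Lam_B_weight_Lam:
  assumes "e \<in> Lam emb ii M" "\<And>l. h l 0 = 0"
  shows "(\<Sum>l\<in>Lam emb ii M. h l (B_weight l e)) = h e ii"
proof -
  have "B_weight l e = (if l = e then ii else 0)" if "l \<in> Lam emb ii M" for l
    using Lam_conj(2)[OF that] assms(1) by (auto simp: B_weight_def)
  then show ?thesis using assms by (subst sum_eq_single[OF finite_Lam assms(1)]) auto
qed

lemma sum_Lam_B_weight_conj_Lam:
  assumes "l0 \<in> Lam emb ii M" "\<And>l. h l 0 = 0"
  shows "(\<Sum>l\<in>Lam emb ii M. h l (B_weight l (conjK emb ii l0))) = h l0 (- ii)"
proof -
  have "B_weight l (conjK emb ii l0) = (if l = l0 then - ii else 0)" if "l \<in> Lam emb ii M" for l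
  proof -
    have "conjK emb ii l0 \<noteq> l" using Lam_conj(2)[OF assms(1)] that by auto
    moreover have "conjK emb ii l0 = conjK emb ii l \<longleftrightarrow> l = l0"
      using Lam_conj(3)[OF assms(1)] Lam_conj(3)[OF that] by metis
    ultimately show ?thesis by (simp add: B_weight_def)
  qed
  then show ?thesis using assms by (subst sum_eq_single[OF finite_Lam assms(1)]) auto
qed

lemma rhs_weight_in_K:
  assumes "e \<in> range d" "e \<in> range emb"
  shows "rhs_weight e = fK emb av a e"
proof -
  note B0 = sum_Lam_B_weight_in_K[OF assms(2), of "\<lambda>l w. w * w"]
    sum_Lam_B_weight_in_K[OF assms(2), of "\<lambda>l w. Ref emb av a l * (w * w)"]
    sum_Lam_B_weight_in_K[OF assms(2), of "\<lambda>l w. Imf emb av ii a l * w"]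
  show ?thesis
  proof (cases "e = 0")
    case True
    then show ?thesis unfolding rhs_weight_def using B0 by (simp add: Gam_def)
  next
    case False
    then have e: "e \<in> Gam emb M" using assms by (simp add: Gam_def eigs_eq)
    have "(\<Sum>g\<in>Gam emb M. if e = g then 1 else 0) = (1 :: 'a)"
      "(\<Sum>g\<in>Gam emb M. fK emb av a g * (if e = g then 1 else 0)) = fK emb av a e"
      by (subst sum_eq_single[OF finite_Gam e]; simp)+
    then show ?thesis unfolding rhs_weight_def using B0 by simp
  qed
qed

lemma rhs_weight_Lam:
  assumes "e \<in> Lam emb ii M"
  shows "rhs_weight e = fK emb av a e"
proof -
  have e: "e \<in> range d" "e \<notin> range emb" using Lam_eigenvalue[OF assms] by auto
  have "rhs_weight e = Ref emb av a e + ii * Imf emb av ii a e"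
    using sums_Gam_outside_K[OF e(2)]
      sum_Lam_B_weight_Lam[OF assms, of "\<lambda>l w. w * w"]
      sum_Lam_B_weight_Lam[OF assms, of "\<lambda>l w. Ref emb av a l * (w * w)"]
      sum_Lam_B_weight_Lam[OF assms, of "\<lambda>l w. Imf emb av ii a l * w"]
    by (simp add: rhs_weight_def ii_sq mult.commute)
  then show ?thesis using fK_eq_Ref_Imf[OF eigenvalue_HV_norm[OF e(1)]] by simp
qed

lemma rhs_weight_conj_Lam:
  assumes "l \<in> Lam emb ii M"
  shows "rhs_weight (conjK emb ii l) = fK emb av a (conjK emb ii l)"
proof -
  have l: "l \<in> range d" "l \<notin> range emb" using Lam_eigenvalue[OF assms] by auto
  have "rhs_weight (conjK emb ii l) = Ref emb av a l - ii * Imf emb av ii a l"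
    using sums_Gam_outside_K[OF Lam_conj(1)[OF assms]]
      sum_Lam_B_weight_conj_Lam[OF assms, of "\<lambda>l w. w * w"]
      sum_Lam_B_weight_conj_Lam[OF assms, of "\<lambda>l w. Ref emb av a l * (w * w)"]
      sum_Lam_B_weight_conj_Lam[OF assms, of "\<lambda>l w. Imf emb av ii a l * w"]
    by (simp add: rhs_weight_def ii_sq mult.commute)
  moreover obtain y where "VK emb l = ii * emb y" using eigenvalue_outside_K(1)[OF l] by blast
  ultimately show ?thesis
    using fK_conj_eq_Ref_Imf[OF eigenvalue_HV_norm[OF l(1)]] by (simp add: conjK_eq)
qed

lemma rhs_weight_eq:
  assumes "e \<in> range d"
  shows "rhs_weight e = fK emb av a e"
proof (cases "e \<in> range emb")
  case False
  obtain y where "y \<noteq> 0" "VK emb e = ii * emb y" using eigenvalue_outside_K(1)[OF assms False] by blast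
  then have Im: "ImK emb ii e \<noteq> 0" by (simp add: ImK_eqI)
  show ?thesis
  proof (cases "0 < ImK emb ii e")
    case True
    then have "e \<in> Lam emb ii M" using assms False by (simp add: Lam_def eigs_eq)
    then show ?thesis by (rule rhs_weight_Lam)
  next
    case neg: False
    have "conjK emb ii e \<in> Lam emb ii M"
      using eigenvalue_outside_K[OF assms False] Im neg by (simp add: Lam_def eigs_eq)
    then show ?thesis using rhs_weight_conj_Lam eigenvalue_outside_K(5)[OF assms False] by metis
  qed
qed (use assms rhs_weight_in_K in blast)

lemma power_series_sums:
  "mat_av_sums av (\<lambda>m. smat (emb (a m)) (mpow (mapM emb M) m)) (dconj (\<lambda>k. fK emb av a (d k)))"
  unfolding mat_av_sums_def M_diag mpow_dconj smat_dconj dconj_nth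
proof (intro allI av_sums_sum)
  fix i j k
  have "av_sums av (\<lambda>m. emb (a m) * d k ^ m) (fK emb av a (d k))"
    using fK_sums eigenvalue_in_disc by simp
  then have "av_sums av (\<lambda>m. Q $ k $ j * (P $ i $ k * (emb (a m) * d k ^ m)))
      (Q $ k $ j * (P $ i $ k * fK emb av a (d k)))"
    by (intro av_sums_cmult)
  then show "av_sums av (\<lambda>m. P $ i $ k * (emb (a m) * d k ^ m) * Q $ k $ j)
      (P $ i $ k * fK emb av a (d k) * Q $ k $ j)"
    by (simp add: mult_ac)
qed simp

end

theorem proposition6p2:
  fixes emb :: "'k::linordered_field \<Rightarrow> 'a::alg_closed_field"
    and av :: "'a \<Rightarrow> real"
    and ii :: 'a
    and a :: "nat \<Rightarrow> 'k"
    and M :: "'k^'n^'n"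
  assumes K_oqc: "ord_quad_closed TYPE('k)"
    and emb: "is_field_emb emb"
    and av: "is_absval av"
    and complete: "av_complete av"
    and ii: "ii * ii = -1"
    and M_Omega: "M \<in> Omega_hat emb av a"
    and M_nz: "M \<noteq> 0"
    and M_ss: "semisimple emb M"
    and M_split: "splitting_bound_le M 2"
  shows "(\<forall>g \<in> insert 0 (Gam emb M).
            av_summable av (\<lambda>m. emb (a m) * g ^ m) \<and> fK emb av a g \<in> Kc emb av)
       \<and> (\<forall>l \<in> Lam emb ii M.
            av_summable av (Re_ser emb a l) \<and> Ref emb av a l \<in> Kc emb av
          \<and> av_summable av (Im_ser emb a l) \<and> Imf emb av ii a l \<in> Kc emb av)
       \<and> mat_av_sums av (\<lambda>m. smat (emb (a m)) (mpow (mapM emb M) m))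
           (smat (fK emb av a 0) (A0mat emb ii M)
            + (\<Sum>g\<in>Gam emb M. smat (fK emb av a g) (Amat emb M g))
            - (\<Sum>l\<in>Lam emb ii M. smat (Ref emb av a l) (Bmat emb ii M l ** Bmat emb ii M l))
            + (\<Sum>l\<in>Lam emb ii M. smat (Imf emb av ii a l) (Bmat emb ii M l)))"
proof -
  obtain P Q :: "'a^'n^'n" and d where PQ: "P ** Q = mat 1" "Q ** P = mat 1"
    and diag: "mapM emb M = P ** diag_mat d ** Q"
    using semisimple_diagonalization[OF M_ss] by blast
  interpret functional_calculus emb P Q M d ii av a
    by unfold_locales (simp_all add: emb PQ diag similarity.dconj_def[OF similarity.intro] ii K_oqc
        M_split av complete M_Omega)
  have "(\<lambda>k. rhs_weight (d k)) = (\<lambda>k. fK emb av a (d k))" using rhs_weight_eq by simp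
  then show ?thesis using Gam_summable_in_Kc Lam_summable_in_Kc power_series_sums
    by (simp add: rhs_eq_dconj)
qed

end
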